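(* Let $p=(p_N)_{N\subseteq\mathbf{U}}$ be a random partition that is positive (i.e., $p_N(\pi)>0$ for all $N\subseteq\mathbf{U}$ and $\pi\in\Pi(N)$) and generates the potential for TU games (i.e., $\mathrm{E}_p(v)=\mathrm{Pot}(v)$ for every $N\subseteq\mathbf{U}$ and every TU game $v$ on $N$, viewed as a TUX game). A restriction operator $r$ is path independent, preserves null games, and satisfies $\mathrm{Pot}^r=\mathrm{E}_p$ (on all TUX games) if and only if $r=r^p$, where $r^p$ is the restriction operator defined by $$w^{r^p}_{-i}(S,\pi)=\frac{n}{n-s}\sum_{B\in\pi\cup\{\emptyset\}}\frac{p_N(\{S\}\cup\pi_{+i\leadsto B})}{p_{N\setminus\{i\}}(\{S\}\cup\pi)}\,w(S,\pi_{+i\leadsto B})$$ for all $N\subseteq\mathbf{U}$, $w\in\mathbb{W}(N)$, $i\in N$, $(S,\pi)\in\mathcal{E}(N\setminus\{i\})$.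
   Context: $\mathbf{U}$ is a finite set of players; cardinalities of sets $N,S,T,B$ are $n,s,t,b$. $\Pi(N)$ is the set of partitions of $N$ (with $\Pi(\emptyset)=\{\emptyset\}$). A random partition is a family $p=(p_N)_{N\subseteq\mathbf{U}}$ with $p_N$ a probability distribution on $\Pi(N)$. For $\pi\in\Pi(N\setminus\{i\})$ and $B\in\pi$, $\pi_{+i\leadsto B}=(\pi\setminus\{B\})\cup\{B\cup\{i\}\}$ and $\pi_{+i\leadsto\emptyset}=\pi\cup\{\{i\}\}$. A TU game on $N$ is $v:2^N\to\mathbb{R}$ with $v(\emptyset)=0$; its subgame $v_{-i}$ is its restriction to $2^{N\setminus\{i\}}$. The potential $\mathrm{Pot}$ for TU games is the unique map with $\mathrm{Pot}$ of the game on $\emptyset$ equal to $0$ and $\sum_{i\in N}[\mathrm{Pot}(v)-\mathrm{Pot}(v_{-i})]=v(N)$; explicitly $\mathrm{Pot}(v)=\sum_{\emptyset\neq S\subseteq N}\frac{(s-1)!(n-s)!}{n!}v(S)$. The embedded coalitions of $N$ are $\mathcal{E}(N)=\{(S,\pi):S\subseteq N,\ \pi\in\Pi(N\setminus S)\}$. A TUX game (partition function game) on $N$ is $w:\mathcal{E}(N)\to\mathbb{R}$ with $w(\emptyset,\pi)=0$ for all $\pi$; $\mathbb{W}(N)$ is the set of these. A TU game $v$ is identified with the TUX game $w(S,\pi)=v(S)$. The null game $\mathbf{0}^N$ is identically $0$. For a random partition $p$, $\mathrm{E}_p(w)=\sum_{\pi\in\Pi(N)}p_N(\pi)\sum_{S\in\pi}w(S,\pi\setminus\{S\})$.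 A restriction operator $r$ assigns to every $N\subseteq\mathbf{U}$, $w\in\mathbb{W}(N)$, $i\in N$ a game $w^r_{-i}\in\mathbb{W}(N\setminus\{i\})$ such that $w^r_{-i}(S,\pi)$ depends only on the values $w(S,\pi_{+i\leadsto B})$, $B\in\pi\cup\{\emptyset\}$ (i.e., if $w,w'$ agree on these, then $w^r_{-i}(S,\pi)=w'^r_{-i}(S,\pi)$). It is path independent if $(w^r_{-i})^r_{-j}=(w^r_{-j})^r_{-i}$ for all $w$ and distinct $i,j$ (so $w^r_{-T}$ is well defined for $T\subseteq N$); it preserves null games if $(\mathbf{0}^N)^r_{-i}=\mathbf{0}^{N\setminus\{i\}}$. For path independent $r$, the $r$-potential $\mathrm{Pot}^r$ is the unique map on TUX games with $\mathrm{Pot}^r(\mathbf{0}^\emptyset)=0$ and $\sum_{i\in N}[\mathrm{Pot}^r(w)-\mathrm{Pot}^r(w^r_{-i})]=w(N,\emptyset)$ for all $w\in\mathbb{W}(N)$; equivalently $\mathrm{Pot}^r(w)=\mathrm{Pot}(v^r_w)$ with $v^r_w(S)=w^r_{-(N\setminus S)}(S,\emptyset)$. *)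

theory Defs
  imports Complex_Main "HOL-Library.Disjoint_Sets"
begin

text \<open>Partitions of N: the library notion partition_on (blocks nonempty, pairwise disjoint,
  union N); partition_on {} {} holds, so Pi({}) = {{}}.\<close>

type_synonym 'a tux = "'a set \<Rightarrow> 'a set set \<Rightarrow> real"
type_synonym 'a restr_op = "'a set \<Rightarrow> 'a tux \<Rightarrow> 'a \<Rightarrow> 'a tux"

definition random_partition :: "'a set \<Rightarrow> ('a set \<Rightarrow> 'a set set \<Rightarrow> real) \<Rightarrow> bool" where
  "random_partition U p \<longleftrightarrow> (\<forall>N. N \<subseteq> U \<longrightarrow>
      (\<forall>\<pi>. partition_on N \<pi> \<longrightarrow> p N \<pi> \<ge> 0) \<and> (\<Sum>\<pi>\<in>{\<pi>. partition_on N \<pi>}. p N \<pi>) = 1)"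

definition positive_rp :: "'a set \<Rightarrow> ('a set \<Rightarrow> 'a set set \<Rightarrow> real) \<Rightarrow> bool" where
  "positive_rp U p \<longleftrightarrow> (\<forall>N \<pi>. N \<subseteq> U \<longrightarrow> partition_on N \<pi> \<longrightarrow> p N \<pi> > 0)"

definition emb :: "'a set \<Rightarrow> 'a set \<Rightarrow> 'a set set \<Rightarrow> bool" where
  "emb N S \<pi> \<longleftrightarrow> S \<subseteq> N \<and> partition_on (N - S) \<pi>"

text \<open>TUX games on N (values outside the embedded coalitions of N are irrelevant).\<close>
definition tux_game :: "'a set \<Rightarrow> 'a tux \<Rightarrow> bool" where
  "tux_game N w \<longleftrightarrow> (\<forall>\<pi>. partition_on N \<pi> \<longrightarrow> w {} \<pi> = 0)"

definition tu_game :: "'a set \<Rightarrow> ('a set \<Rightarrow> real) \<Rightarrow> bool" where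
  "tu_game N v \<longleftrightarrow> v {} = 0"

text \<open>pi_{+i ~> B}; B = {} means i forms a singleton block.\<close>
definition add_to :: "'a \<Rightarrow> 'a set \<Rightarrow> 'a set set \<Rightarrow> 'a set set" where
  "add_to i B \<pi> = (if B = {} then insert {i} \<pi> else insert (B \<union> {i}) (\<pi> - {B}))"

definition Ep :: "('a set \<Rightarrow> 'a set set \<Rightarrow> real) \<Rightarrow> 'a set \<Rightarrow> 'a tux \<Rightarrow> real" where
  "Ep p N w = (\<Sum>\<pi>\<in>{\<pi>. partition_on N \<pi>}. p N \<pi> * (\<Sum>S\<in>\<pi>. w S (\<pi> - {S})))"

definition Pot :: "'a set \<Rightarrow> ('a set \<Rightarrow> real) \<Rightarrow> real" where
  "Pot N v = (\<Sum>S\<in>{S. S \<subseteq> N \<and> S \<noteq> {}}.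
      fact (card S - 1) * fact (card N - card S) / fact (card N) * v S)"

definition restriction_operator :: "'a set \<Rightarrow> 'a restr_op \<Rightarrow> bool" where
  "restriction_operator U r \<longleftrightarrow> (\<forall>N w i. N \<subseteq> U \<longrightarrow> tux_game N w \<longrightarrow> i \<in> N \<longrightarrow>
      tux_game (N - {i}) (r N w i) \<and>
      (\<forall>w' S \<pi>. tux_game N w' \<longrightarrow> emb (N - {i}) S \<pi> \<longrightarrow>
         (\<forall>B \<in> insert {} \<pi>. w S (add_to i B \<pi>) = w' S (add_to i B \<pi>)) \<longrightarrow>
         r N w i S \<pi> = r N w' i S \<pi>))"

definition path_independent :: "'a set \<Rightarrow> 'a restr_op \<Rightarrow> bool" where
  "path_independent U r \<longleftrightarrow> (\<forall>N w i j S \<pi>. N \<subseteq> U \<longrightarrow> tux_game N w \<longrightarrow> i \<in> N \<longrightarrow> j \<in> N \<longrightarrow>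
      i \<noteq> j \<longrightarrow> emb (N - {i} - {j}) S \<pi> \<longrightarrow>
      r (N - {i}) (r N w i) j S \<pi> = r (N - {j}) (r N w j) i S \<pi>)"

definition preserves_null :: "'a set \<Rightarrow> 'a restr_op \<Rightarrow> bool" where
  "preserves_null U r \<longleftrightarrow> (\<forall>N i S \<pi>. N \<subseteq> U \<longrightarrow> i \<in> N \<longrightarrow> emb (N - {i}) S \<pi> \<longrightarrow>
      r N (\<lambda>_ _. 0) i S \<pi> = 0)"

text \<open>r-potential, defined by its defining recursion
  sum_{i in N} [Pot^r(w) - Pot^r(w^r_{-i})] = w(N, {}), Pot^r = 0 on the empty player set.\<close>
function potr :: "'a restr_op \<Rightarrow> 'a set \<Rightarrow> 'a tux \<Rightarrow> real" where
  "potr r N w = (if N = {} \<or> infinite N then 0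
     else (w N {} + (\<Sum>i\<in>N. potr r (N - {i}) (r N w i))) / real (card N))"
  by pat_completeness auto
termination
  by (relation "measure (\<lambda>(r, N, w). card N)") (auto simp: card_gt_0_iff)

declare potr.simps [simp del]

definition rp :: "('a set \<Rightarrow> 'a set set \<Rightarrow> real) \<Rightarrow> 'a restr_op" where
  "rp p N w i S \<pi> = real (card N) / (real (card N) - real (card S)) *
     (\<Sum>B\<in>insert {} \<pi>. p N (insert S (add_to i B \<pi>)) / p (N - {i}) (insert S \<pi>)
        * w S (add_to i B \<pi>))"

end

theory Submission
  imports Defs
begin

(* Write E_p(w) = sum_S E_S(w), where E_S(w) = sum_sigma p_N({S} u sigma) w(S, sigma) collects
  the terms in which S is a block (Ep_coalition).  The weights of r^p are chosen so that, for
  i not in S and every test function h on partitions,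
  E_S^{N-i}(h . w^{r^p}_{-i}) = n/(n-s) E_S^N((h o drop_player i) . w)   (Ep_coalition_rp).
  With h = 1 this yields sum_i E_p(w^{r^p}_{-i}) = n E_p(w) - w(N, {}), using p_N({N}) = 1/n,
  which is all that generating the potential contributes; so Pot^{r^p} = E_p by the defining
  recursion of Pot^r.  With h an indicator, the twice restricted game becomes symmetric in the two
  removed players, which is path independence.

  Conversely, applying Pot^r = E_p to the part of w supported on a coalition S gives
  sum_{k not in S} E_S^{N-k}(w^r_{-k}) = n E_S^N(w).  By induction on N and path independence all
  summands agree, so (n-s) E_S^{N-i}(w^r_{-i}) = n E_S^N(w). *)

section \<open>Adding a player to a partition\<close>

abbreviation partitions :: "'a set \<Rightarrow> 'a set set set" where
  "partitions N \<equiv> {\<pi>. partition_on N \<pi>}"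

definition drop_player :: "'a \<Rightarrow> 'a set set \<Rightarrow> 'a set set" where
  "drop_player i \<rho> = (\<lambda>B. B - {i}) ` \<rho> - {{}}"

lemma partition_on_Diff_block:
  assumes "partition_on N \<pi>" "T \<in> \<pi>"
  shows "partition_on (N - T) (\<pi> - {T})"
proof -
  have "disjnt T (\<Union>(\<pi> - {T}))"
    using assms unfolding partition_on_def disjoint_def disjnt_def by blast
  moreover have "partition_on N (insert T (\<pi> - {T}))"
    using assms by (simp add: insert_absorb)
  ultimately show ?thesis
    using partition_on_insert by blast
qed

lemma partition_on_insert_block:
  assumes "S \<noteq> {}" "S \<subseteq> N" "partition_on (N - S) \<sigma>"
  shows "partition_on N (insert S \<sigma>)"
proof -
  have "disjnt S (\<Union>\<sigma>)"
    using partition_onD1[OF assms(3)] by (auto simp: disjnt_def)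
  then show ?thesis
    using partition_on_insert assms by blast
qed

lemma block_notin_partition_of_rest: "S \<noteq> {} \<Longrightarrow> partition_on (N - S) \<sigma> \<Longrightarrow> S \<notin> \<sigma>"
  using partition_onD1 by blast

lemma add_to_eq: "{} \<notin> \<sigma> \<Longrightarrow> add_to i B \<sigma> = insert (B \<union> {i}) (\<sigma> - {B})"
  by (auto simp: add_to_def)

lemma partition_on_add_to:
  assumes P: "partition_on M \<sigma>" and i: "i \<notin> M" and B: "B \<in> insert {} \<sigma>"
  shows "partition_on (insert i M) (add_to i B \<sigma>)"
proof -
  have "{} \<notin> \<sigma>" "\<Union>\<sigma> = M" "disjoint \<sigma>"
    using P by (auto simp: partition_on_def)
  then have "disjnt (B \<union> {i}) (\<Union>(\<sigma> - {B}))" and "B \<subseteq> M"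
    using B i unfolding disjoint_def disjnt_def by blast+
  moreover have "partition_on (M - B) (\<sigma> - {B})"
    using B P partition_on_Diff_block[OF P] \<open>{} \<notin> \<sigma>\<close> by (cases "B = {}") auto
  moreover have "insert i M - (B \<union> {i}) = M - B"
    using i by blast
  ultimately show ?thesis
    using \<open>{} \<notin> \<sigma>\<close> by (auto simp: add_to_eq partition_on_insert)
qed

lemma emb_add_to:
  assumes "emb (M - {j}) S \<pi>" "j \<in> M" "B \<in> insert {} \<pi>"
  shows "emb M S (add_to j B \<pi>)"
proof -
  have "partition_on (insert j (M - {j} - S)) (add_to j B \<pi>)"
    using assms by (intro partition_on_add_to) (auto simp: emb_def)
  moreover have "insert j (M - {j} - S) = M - S"
    using assms(1,2) by (auto simp: emb_def)
  ultimately show ?thesis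
    using assms(1) by (auto simp: emb_def)
qed

lemma drop_player_add_to:
  assumes "partition_on M \<sigma>" "i \<notin> M" "B \<in> insert {} \<sigma>"
  shows "drop_player i (add_to i B \<sigma>) = \<sigma>"
proof -
  have "{} \<notin> \<sigma>" "\<And>b. b \<in> \<sigma> \<Longrightarrow> b - {i} = b"
    using assms(1,2) by (auto simp: partition_on_def)
  moreover have "B \<union> {i} - {i} = B"
    using assms by (auto simp: partition_on_def)
  ultimately show ?thesis
    using assms(3) by (auto simp: drop_player_def add_to_eq image_iff)
qed

lemma drop_player_commute: "drop_player i (drop_player j \<rho>) = drop_player j (drop_player i \<rho>)"
  unfolding drop_player_def by (auto simp: image_iff)

lemma partition_on_drop_player:
  assumes "partition_on (insert i M) \<rho>" "i \<notin> M"
  shows "partition_on M (drop_player i \<rho>)"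
proof -
  have "partition_on (- {i} \<inter> insert i M) ((\<inter>) (- {i}) ` \<rho> - {{}})"
    using partition_on_restrict[OF assms(1)] .
  moreover have "- {i} \<inter> insert i M = M"
    using assms(2) by blast
  moreover have "(\<inter>) (- {i}) ` \<rho> = (\<lambda>B. B - {i}) ` \<rho>"
    by blast
  ultimately show ?thesis
    unfolding drop_player_def by simp
qed

lemma add_to_drop_player:
  assumes P: "partition_on (insert i M) \<rho>" and i: "i \<notin> M"
  obtains B where "B \<in> insert {} (drop_player i \<rho>)" "\<rho> = add_to i B (drop_player i \<rho>)"
proof -
  obtain C where C: "C \<in> \<rho>" "i \<in> C"
    using P by (auto simp: partition_on_def)
  have others: "D - {i} = D" "D \<inter> C = {}" if "D \<in> \<rho> - {C}" for D
    using that C P unfolding partition_on_def disjoint_def by blast+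
  have "{} \<notin> \<rho>"
    using P by (simp add: partition_on_def)
  have "(\<lambda>D. D - {i}) ` \<rho> = insert (C - {i}) (\<rho> - {C})"
    using C others by (force simp: image_iff)
  then have drop: "drop_player i \<rho> = (if C - {i} = {} then \<rho> - {C} else insert (C - {i}) (\<rho> - {C}))"
    unfolding drop_player_def using \<open>{} \<notin> \<rho>\<close> by auto
  show thesis
  proof (cases "C - {i} = {}")
    case True
    then have "C = {i}"
      using C by blast
    then have "\<rho> = add_to i {} (drop_player i \<rho>)"
      using C True drop by (auto simp: add_to_def)
    then show thesis
      by (rule that[rotated]) simp
  next
    case False
    have "C - {i} \<notin> \<rho> - {C}"
      using others False by blast
    then have "add_to i (C - {i}) (drop_player i \<rho>) = insert C (\<rho> - {C})"
      using False drop C by (auto simp: add_to_def insert_absorb)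
    also have "\<dots> = \<rho>"
      using C by blast
    finally show thesis
      using drop False by (intro that[of "C - {i}"]) auto
  qed
qed

lemma inj_on_add_to:
  assumes "partition_on M \<sigma>" "i \<notin> M"
  shows "inj_on (\<lambda>B. add_to i B \<sigma>) (insert {} \<sigma>)"
proof (rule inj_onI)
  fix B B' assume B: "B \<in> insert {} \<sigma>" "B' \<in> insert {} \<sigma>" and eq: "add_to i B \<sigma> = add_to i B' \<sigma>"
  have "{} \<notin> \<sigma>" "i \<notin> \<Union>\<sigma>"
    using assms by (auto simp: partition_on_def)
  then have block_of_i: "{D \<in> add_to i A \<sigma>. i \<in> D} = {A \<union> {i}}" for A
    by (auto simp: add_to_eq)
  have "B \<union> {i} = B' \<union> {i}"
    using block_of_i[of B] block_of_i[of B'] eq by simp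
  then show "B = B'"
    using B \<open>i \<notin> \<Union>\<sigma>\<close> by blast
qed

lemma bij_betw_add_to:
  assumes "partition_on M \<sigma>" "i \<notin> M"
  shows "bij_betw (\<lambda>B. add_to i B \<sigma>) (insert {} \<sigma>)
           {\<rho> \<in> partitions (insert i M). drop_player i \<rho> = \<sigma>}"
proof (rule bij_betw_imageI)
  show "inj_on (\<lambda>B. add_to i B \<sigma>) (insert {} \<sigma>)"
    using inj_on_add_to[OF assms] .
  show "(\<lambda>B. add_to i B \<sigma>) ` insert {} \<sigma> = {\<rho> \<in> partitions (insert i M). drop_player i \<rho> = \<sigma>}"
  proof (intro equalityI subsetI)
    fix \<rho> assume "\<rho> \<in> (\<lambda>B. add_to i B \<sigma>) ` insert {} \<sigma>"
    then obtain B where "B \<in> insert {} \<sigma>" "\<rho> = add_to i B \<sigma>"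
      by blast
    then show "\<rho> \<in> {\<rho> \<in> partitions (insert i M). drop_player i \<rho> = \<sigma>}"
      using partition_on_add_to[OF assms] drop_player_add_to[OF assms] by simp
  next
    fix \<rho> assume "\<rho> \<in> {\<rho> \<in> partitions (insert i M). drop_player i \<rho> = \<sigma>}"
    then have "partition_on (insert i M) \<rho>" "drop_player i \<rho> = \<sigma>"
      by auto
    then show "\<rho> \<in> (\<lambda>B. add_to i B \<sigma>) ` insert {} \<sigma>"
      using add_to_drop_player[OF _ assms(2)] by (metis image_eqI)
  qed
qed

lemma sum_partitions_insert:
  assumes "finite M" "i \<notin> M"
  shows "(\<Sum>\<sigma>\<in>partitions M. \<Sum>B\<in>insert {} \<sigma>. f (add_to i B \<sigma>))
       = (\<Sum>\<rho>\<in>partitions (insert i M). f \<rho>)"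
proof -
  have "(\<Sum>\<sigma>\<in>partitions M. \<Sum>B\<in>insert {} \<sigma>. f (add_to i B \<sigma>))
      = (\<Sum>\<sigma>\<in>partitions M. \<Sum>\<rho>\<in>{\<rho> \<in> partitions (insert i M). drop_player i \<rho> = \<sigma>}. f \<rho>)"
    by (rule sum.cong[OF refl], rule sum.reindex_bij_betw, rule bij_betw_add_to[OF _ assms(2)]) simp
  also have "\<dots> = (\<Sum>\<rho>\<in>partitions (insert i M). f \<rho>)"
    using assms by (intro sum.group) (auto simp: finitely_many_partition_on partition_on_drop_player)
  finally show ?thesis .
qed

section \<open>The expectation coalition by coalition\<close>

definition Ep_coalition :: "('a set \<Rightarrow> 'a set set \<Rightarrow> real) \<Rightarrow> 'a set \<Rightarrow> 'a set \<Rightarrow> ('a set set \<Rightarrow> real) \<Rightarrow> real" where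
  "Ep_coalition p N S g = (\<Sum>\<sigma>\<in>partitions (N - S). p N (insert S \<sigma>) * g \<sigma>)"

lemma Ep_coalition_cong:
  "(\<And>\<sigma>. partition_on (N - S) \<sigma> \<Longrightarrow> g \<sigma> = g' \<sigma>) \<Longrightarrow> Ep_coalition p N S g = Ep_coalition p N S g'"
  unfolding Ep_coalition_def by (rule sum.cong) auto

lemma Ep_coalition_indicator:
  assumes "finite N" "partition_on (N - S) \<sigma>\<^sub>0"
  shows "Ep_coalition p N S (\<lambda>\<sigma>. of_bool (\<sigma> = \<sigma>\<^sub>0) * g \<sigma>) = p N (insert S \<sigma>\<^sub>0) * g \<sigma>\<^sub>0"
proof -
  have "Ep_coalition p N S (\<lambda>\<sigma>. of_bool (\<sigma> = \<sigma>\<^sub>0) * g \<sigma>)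
      = (\<Sum>\<sigma>\<in>partitions (N - S). if \<sigma> = \<sigma>\<^sub>0 then p N (insert S \<sigma>\<^sub>0) * g \<sigma>\<^sub>0 else 0)"
    unfolding Ep_coalition_def by (intro sum.cong) auto
  then show ?thesis
    using assms by (simp add: finitely_many_partition_on)
qed

lemma Ep_coalition_grand: "Ep_coalition p N N g = p N {N} * g {}"
  by (simp add: Ep_coalition_def partition_on_empty)

lemma bij_betw_remove_block:
  "bij_betw (\<lambda>(\<pi>, S). (S, \<pi> - {S}))
     (SIGMA \<pi>:partitions N. \<pi>) (SIGMA S:Pow N - {{}}. partitions (N - S))"
proof (rule bij_betw_byWitness[where f' = "\<lambda>(S, \<sigma>). (insert S \<sigma>, S)"])
  show "\<forall>a\<in>SIGMA \<pi>:partitions N. \<pi>. (\<lambda>(S, \<sigma>). (insert S \<sigma>, S)) ((\<lambda>(\<pi>, S). (S, \<pi> - {S})) a) = a"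
    by (auto simp: insert_absorb)
  show "\<forall>a\<in>SIGMA S:Pow N - {{}}. partitions (N - S). (\<lambda>(\<pi>, S). (S, \<pi> - {S})) ((\<lambda>(S, \<sigma>). (insert S \<sigma>, S)) a) = a"
    by (simp add: block_notin_partition_of_rest)
  show "(\<lambda>(\<pi>, S). (S, \<pi> - {S})) ` (SIGMA \<pi>:partitions N. \<pi>) \<subseteq> (SIGMA S:Pow N - {{}}. partitions (N - S))"
    using partition_on_Diff_block by (auto simp: partition_on_def)
  show "(\<lambda>(S, \<sigma>). (insert S \<sigma>, S)) ` (SIGMA S:Pow N - {{}}. partitions (N - S)) \<subseteq> (SIGMA \<pi>:partitions N. \<pi>)"
    by (simp add: image_subset_iff partition_on_insert_block)
qed

lemma Ep_eq_sum_Ep_coalition: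
  assumes "finite N"
  shows "Ep p N w = (\<Sum>S\<in>Pow N - {{}}. Ep_coalition p N S (w S))"
proof -
  have fin_blocks: "\<forall>\<pi>\<in>partitions N. finite \<pi>"
    using assms finite_elements by blast
  have "Ep p N w = (\<Sum>(\<pi>, S)\<in>(SIGMA \<pi>:partitions N. \<pi>). p N \<pi> * w S (\<pi> - {S}))"
    unfolding Ep_def sum_distrib_left
    using sum.Sigma[OF finitely_many_partition_on[OF assms] fin_blocks] by simp
  also have "\<dots> = (\<Sum>(S, \<sigma>)\<in>(SIGMA S:Pow N - {{}}. partitions (N - S)). p N (insert S \<sigma>) * w S \<sigma>)"
    unfolding sum.reindex_bij_betw[OF bij_betw_remove_block, symmetric]
    by (intro sum.cong refl) (auto simp: insert_absorb)
  also have "\<dots> = (\<Sum>S\<in>Pow N - {{}}. Ep_coalition p N S (w S))"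
    unfolding Ep_coalition_def
    using sum.Sigma[symmetric, of "Pow N - {{}}" "\<lambda>S. partitions (N - S)"] assms
    by (simp add: finitely_many_partition_on split_def)
  finally show ?thesis .
qed

lemma Ep_eq_Ep_coalition_if_supported:
  assumes "finite N" "S \<noteq> {}" "\<And>T \<rho>. emb N T \<rho> \<Longrightarrow> T \<noteq> S \<Longrightarrow> w T \<rho> = 0"
  shows "Ep p N w = (if S \<subseteq> N then Ep_coalition p N S (w S) else 0)"
proof -
  have "Ep_coalition p N T (w T) = 0" if "T \<in> Pow N - {{}}" "T \<noteq> S" for T
    using that assms(3) unfolding Ep_coalition_def emb_def by (intro sum.neutral) auto
  then have "Ep p N w = (\<Sum>T\<in>Pow N - {{}}. if T = S then Ep_coalition p N S (w S) else 0)"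
    unfolding Ep_eq_sum_Ep_coalition[OF assms(1)] by (intro sum.cong) auto
  then show ?thesis
    using assms(1,2) by simp
qed

lemma p_singleton_partition:
  assumes gen: "\<forall>N v. N \<subseteq> U \<longrightarrow> tu_game N v \<longrightarrow> Ep p N (\<lambda>S \<pi>. v S) = Pot N v"
    and "N \<subseteq> U" "finite N" "N \<noteq> {}"
  shows "p N {N} = 1 / real (card N)"
proof -
  let ?v = "\<lambda>T. of_bool (T = N) :: real"
  have "Ep_coalition p N T (\<lambda>\<sigma>. ?v T) = (if T = N then p N {N} else 0)" for T
    by (simp add: Ep_coalition_def partition_on_empty)
  then have "Ep p N (\<lambda>S \<pi>. ?v S) = p N {N}"
    using assms(3,4) by (simp add: Ep_eq_sum_Ep_coalition)
  moreover have "Pot N ?v = 1 / real (card N)"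
  proof -
    obtain m where m: "card N = Suc m"
      using assms(3,4) by (metis card_gt_0_iff gr0_implies_Suc)
    have "Pot N ?v = (\<Sum>S\<in>{S. S \<subseteq> N \<and> S \<noteq> {}}. if S = N then fact m / fact (Suc m) else 0)"
      unfolding Pot_def by (intro sum.cong) (auto simp: m)
    also have "\<dots> = fact m / fact (Suc m)"
      using assms(3,4) by simp
    finally show ?thesis
      by (simp add: m)
  qed
  moreover have "tu_game N ?v"
    using assms(4) by (simp add: tu_game_def)
  ultimately show ?thesis
    using gen assms(2) by simp
qed

section \<open>The restriction operator r^p\<close>

lemma positive_rpD: "positive_rp U p \<Longrightarrow> N \<subseteq> U \<Longrightarrow> partition_on N \<pi> \<Longrightarrow> p N \<pi> > 0"
  unfolding positive_rp_def by blast

lemma Ep_coalition_rp: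
  assumes "finite N" "N \<subseteq> U" "positive_rp U p" "S \<noteq> {}" "S \<subseteq> N" "i \<in> N" "i \<notin> S"
  shows "Ep_coalition p (N - {i}) S (\<lambda>\<sigma>. h \<sigma> * rp p N w i S \<sigma>)
       = real (card N) / (real (card N) - real (card S))
         * Ep_coalition p N S (\<lambda>\<rho>. h (drop_player i \<rho>) * w S \<rho>)"
proof -
  let ?c = "real (card N) / (real (card N) - real (card S))"
  let ?f = "\<lambda>\<rho>. p N (insert S \<rho>) * (h (drop_player i \<rho>) * w S \<rho>)"
  have "p (N - {i}) (insert S \<sigma>) * (h \<sigma> * rp p N w i S \<sigma>) = ?c * (\<Sum>B\<in>insert {} \<sigma>. ?f (add_to i B \<sigma>))"
    if \<sigma>: "partition_on (N - {i} - S) \<sigma>" for \<sigma>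
  proof -
    have "partition_on (N - {i}) (insert S \<sigma>)"
      using partition_on_insert_block[OF assms(4) _ \<sigma>] assms(5,7) by blast
    moreover have "N - {i} \<subseteq> U"
      using assms(2) by blast
    ultimately have "p (N - {i}) (insert S \<sigma>) \<noteq> 0"
      using positive_rpD[OF assms(3)] by (metis less_irrefl)
    moreover have "(\<Sum>B\<in>insert {} \<sigma>. ?f (add_to i B \<sigma>))
        = h \<sigma> * (\<Sum>B\<in>insert {} \<sigma>. p N (insert S (add_to i B \<sigma>)) * w S (add_to i B \<sigma>))"
      unfolding sum_distrib_left
      by (intro sum.cong refl) (simp add: drop_player_add_to[OF \<sigma>])
    moreover have "rp p N w i S \<sigma> = ?c * ((\<Sum>B\<in>insert {} \<sigma>. p N (insert S (add_to i B \<sigma>)) * w S (add_to i B \<sigma>))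
        / p (N - {i}) (insert S \<sigma>))"
      unfolding rp_def by (simp add: sum_divide_distrib)
    ultimately show ?thesis
      by simp
  qed
  then have "Ep_coalition p (N - {i}) S (\<lambda>\<sigma>. h \<sigma> * rp p N w i S \<sigma>)
      = ?c * (\<Sum>\<sigma>\<in>partitions (N - {i} - S). \<Sum>B\<in>insert {} \<sigma>. ?f (add_to i B \<sigma>))"
    unfolding Ep_coalition_def sum_distrib_left by (intro sum.cong) auto
  also have "\<dots> = ?c * (\<Sum>\<rho>\<in>partitions (insert i (N - {i} - S)). ?f \<rho>)"
    using assms(1) sum_partitions_insert[of "N - {i} - S" i ?f] by simp
  also have "insert i (N - {i} - S) = N - S"
    using assms(6,7) by blast
  finally show ?thesis
    unfolding Ep_coalition_def .
qed

lemma rp_as_Ep_coalition: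
  assumes "finite N" "N \<subseteq> U" "positive_rp U p" "S \<noteq> {}" "emb (N - {i}) S \<sigma>" "i \<in> N"
  shows "p (N - {i}) (insert S \<sigma>) * rp p N w i S \<sigma>
       = real (card N) / (real (card N) - real (card S))
         * Ep_coalition p N S (\<lambda>\<rho>. of_bool (drop_player i \<rho> = \<sigma>) * w S \<rho>)"
proof -
  have "S \<subseteq> N" "i \<notin> S" "partition_on (N - {i} - S) \<sigma>"
    using assms(5) by (auto simp: emb_def)
  then show ?thesis
    using Ep_coalition_rp[OF assms(1-4) _ assms(6), of "\<lambda>\<tau>. of_bool (\<tau> = \<sigma>)" w]
      Ep_coalition_indicator[of "N - {i}" S \<sigma>] assms(1)
    by simp
qed

lemma rp_cong:
  "(\<And>B. B \<in> insert {} \<pi> \<Longrightarrow> w S (add_to i B \<pi>) = w' S (add_to i B \<pi>)) \<Longrightarrow> rp p N w i S \<pi> = rp p N w' i S \<pi>"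
  unfolding rp_def by (auto intro!: sum.cong)

lemma rp_tux_game:
  assumes "tux_game N w" "i \<in> N"
  shows "tux_game (N - {i}) (rp p N w i)"
proof -
  have "w {} (add_to i B \<pi>) = 0" if "partition_on (N - {i}) \<pi>" "B \<in> insert {} \<pi>" for \<pi> B
    using partition_on_add_to[OF that(1) _ that(2)] assms insert_Diff[of i N]
    unfolding tux_game_def by force
  then show ?thesis
    unfolding tux_game_def rp_def by simp
qed

lemma rp_preserves_null: "preserves_null U (rp p)"
  by (simp add: preserves_null_def rp_def)

lemma rp_twice:
  assumes "finite N" "N \<subseteq> U" "positive_rp U p" "S \<noteq> {}" "emb (N - {i} - {j}) S \<pi>"
    and "i \<in> N" "j \<in> N" "i \<noteq> j"
  shows "p (N - {i} - {j}) (insert S \<pi>) * rp p (N - {i}) (rp p N w i) j S \<pi>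
       = real (card N - 1) / (real (card N - 1) - real (card S)) * (real (card N) / (real (card N) - real (card S)))
         * Ep_coalition p N S (\<lambda>\<rho>. of_bool (drop_player j (drop_player i \<rho>) = \<pi>) * w S \<rho>)"
proof -
  have S: "S \<subseteq> N - {i} - {j}" and \<pi>: "partition_on (N - {i} - {j} - S) \<pi>"
    using assms(5) by (auto simp: emb_def)
  then have "N - {i} \<subseteq> U" "S \<subseteq> N - {i}" "j \<notin> S"
    using assms(2) by blast+
  have "p (N - {i} - {j}) (insert S \<pi>) * rp p (N - {i}) (rp p N w i) j S \<pi>
      = Ep_coalition p (N - {i} - {j}) S (\<lambda>\<sigma>. of_bool (\<sigma> = \<pi>) * rp p (N - {i}) (rp p N w i) j S \<sigma>)"
    using Ep_coalition_indicator[OF _ \<pi>] assms(1) by simp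
  also have "\<dots> = real (card N - 1) / (real (card N - 1) - real (card S))
      * Ep_coalition p (N - {i}) S (\<lambda>\<tau>. of_bool (drop_player j \<tau> = \<pi>) * rp p N w i S \<tau>)"
    using Ep_coalition_rp[of "N - {i}" U p S j "\<lambda>\<sigma>. of_bool (\<sigma> = \<pi>)" "rp p N w i"]
      assms \<open>N - {i} \<subseteq> U\<close> \<open>S \<subseteq> N - {i}\<close> \<open>j \<notin> S\<close>
    by (simp add: card_Diff_singleton)
  also have "Ep_coalition p (N - {i}) S (\<lambda>\<tau>. of_bool (drop_player j \<tau> = \<pi>) * rp p N w i S \<tau>)
      = real (card N) / (real (card N) - real (card S))
        * Ep_coalition p N S (\<lambda>\<rho>. of_bool (drop_player j (drop_player i \<rho>) = \<pi>) * w S \<rho>)"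
    using Ep_coalition_rp[of N U p S i "\<lambda>\<tau>. of_bool (drop_player j \<tau> = \<pi>)"] assms S by auto
  finally show ?thesis
    by (simp only: mult.assoc)
qed

lemma rp_path_independent:
  assumes "finite N" "positive_rp U p" "N \<subseteq> U" "tux_game N w" "i \<in> N" "j \<in> N" "i \<noteq> j"
    and "emb (N - {i} - {j}) S \<pi>"
  shows "rp p (N - {i}) (rp p N w i) j S \<pi> = rp p (N - {j}) (rp p N w j) i S \<pi>"
proof -
  have swap: "N - {j} - {i} = N - {i} - {j}"
    by blast
  have \<pi>: "partition_on (N - {i} - {j} - S) \<pi>" "S \<subseteq> N - {i} - {j}"
    using assms(8) by (auto simp: emb_def)
  show ?thesis
  proof (cases "S = {}")
    case True
    have "j \<in> N - {i}" "i \<in> N - {j}"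
      using assms(5-7) by auto
    then have "tux_game (N - {i} - {j}) (rp p (N - {i}) (rp p N w i) j)"
      "tux_game (N - {j} - {i}) (rp p (N - {j}) (rp p N w j) i)"
      using rp_tux_game[OF rp_tux_game[OF assms(4,5)]] rp_tux_game[OF rp_tux_game[OF assms(4,6)]]
      by blast+
    then show ?thesis
      using True \<pi> unfolding swap by (simp add: tux_game_def)
  next
    case False
    have "p (N - {i} - {j}) (insert S \<pi>) * rp p (N - {i}) (rp p N w i) j S \<pi>
        = p (N - {i} - {j}) (insert S \<pi>) * rp p (N - {j}) (rp p N w j) i S \<pi>"
      using rp_twice[OF assms(1,3,2) False assms(8,5,6,7)]
        rp_twice[OF assms(1,3,2) False _ assms(6,5) assms(7)[symmetric], of \<pi> w]
      by (simp add: swap assms(8) drop_player_commute mult.commute)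
    moreover have "N - {i} - {j} \<subseteq> U"
      using assms(3) by blast
    then have "p (N - {i} - {j}) (insert S \<pi>) > 0"
      using positive_rpD[OF assms(2)] partition_on_insert_block[OF False \<pi>(2,1)] by blast
    ultimately show ?thesis
      by simp
  qed
qed

section \<open>Locality of restriction operators\<close>

lemma restriction_tux_game:
  "restriction_operator U r \<Longrightarrow> N \<subseteq> U \<Longrightarrow> tux_game N w \<Longrightarrow> i \<in> N \<Longrightarrow> tux_game (N - {i}) (r N w i)"
  unfolding restriction_operator_def by blast

lemma restriction_local:
  assumes "restriction_operator U r" "N \<subseteq> U" "tux_game N w" "tux_game N w'" "i \<in> N" "emb (N - {i}) S \<pi>"
    and "\<And>B. B \<in> insert {} \<pi> \<Longrightarrow> w S (add_to i B \<pi>) = w' S (add_to i B \<pi>)"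
  shows "r N w i S \<pi> = r N w' i S \<pi>"
  using assms unfolding restriction_operator_def by blast

lemma restriction_vanishes:
  assumes "restriction_operator U r" "preserves_null U r" "N \<subseteq> U" "tux_game N w" "i \<in> N"
    and "emb (N - {i}) S \<pi>" "\<And>B. B \<in> insert {} \<pi> \<Longrightarrow> w S (add_to i B \<pi>) = 0"
  shows "r N w i S \<pi> = 0"
proof -
  have "r N w i S \<pi> = r N (\<lambda>_ _. 0) i S \<pi>"
    using assms by (intro restriction_local[OF assms(1)]) (auto simp: tux_game_def)
  also have "\<dots> = 0"
    using assms(2,3,5,6) unfolding preserves_null_def by blast
  finally show ?thesis .
qed

lemma Ep_restriction_of_coalition_game:
  assumes "restriction_operator U r" "preserves_null U r" "finite N" "N \<subseteq> U" "tux_game N w"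
    and "S \<noteq> {}" "k \<in> N"
  shows "Ep p (N - {k}) (r N (\<lambda>T \<rho>. if T = S then w T \<rho> else 0) k)
       = (if S \<subseteq> N - {k} then Ep_coalition p (N - {k}) S (r N w k S) else 0)"
proof -
  let ?u = "\<lambda>T \<rho>. if T = S then w T \<rho> else 0"
  have u: "tux_game N ?u"
    using assms(5,6) by (simp add: tux_game_def)
  have "Ep p (N - {k}) (r N ?u k) = (if S \<subseteq> N - {k} then Ep_coalition p (N - {k}) S (r N ?u k S) else 0)"
  proof (rule Ep_eq_Ep_coalition_if_supported)
    fix T \<rho> assume "emb (N - {k}) T \<rho>" "T \<noteq> S"
    then show "r N ?u k T \<rho> = 0"
      by (intro restriction_vanishes[OF assms(1,2,4) u assms(7)]) simp_all
  qed (use assms(3,6) in auto)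
  moreover have "Ep_coalition p (N - {k}) S (r N ?u k S) = Ep_coalition p (N - {k}) S (r N w k S)"
    if "S \<subseteq> N - {k}"
  proof (rule Ep_coalition_cong)
    fix \<sigma> assume "partition_on (N - {k} - S) \<sigma>"
    then have "emb (N - {k}) S \<sigma>"
      using that by (simp add: emb_def)
    then show "r N ?u k S \<sigma> = r N w k S \<sigma>"
      by (rule restriction_local[OF assms(1,4) u assms(5,7)]) simp
  qed
  ultimately show ?thesis
    by simp
qed

lemma restriction_localized_game:
  assumes "restriction_operator U r" "preserves_null U r" "N \<subseteq> U" "tux_game N w" "i \<in> N"
    and "S \<noteq> {}" "emb (N - {i}) S \<sigma>"
  shows "r N (\<lambda>T \<rho>. if T = S \<and> drop_player i \<rho> = \<sigma>\<^sub>0 then w T \<rho> else 0) i S \<sigma>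
       = of_bool (\<sigma> = \<sigma>\<^sub>0) * r N w i S \<sigma>"
proof -
  let ?w' = "\<lambda>T \<rho>. if T = S \<and> drop_player i \<rho> = \<sigma>\<^sub>0 then w T \<rho> else 0"
  have w': "tux_game N ?w'"
    using assms(6) by (simp add: tux_game_def)
  have "partition_on (N - {i} - S) \<sigma>" "i \<notin> N - {i} - S"
    using assms(7) by (auto simp: emb_def)
  then have "?w' S (add_to i B \<sigma>) = of_bool (\<sigma> = \<sigma>\<^sub>0) * w S (add_to i B \<sigma>)" if "B \<in> insert {} \<sigma>" for B
    using drop_player_add_to[OF _ _ that] by simp
  then show ?thesis
    using restriction_local[OF assms(1,3) w' assms(4,5,7)] restriction_vanishes[OF assms(1-3) w' assms(5,7)]
    by (cases "\<sigma> = \<sigma>\<^sub>0") auto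
qed

section \<open>Operators agreeing with r^p\<close>

definition agrees_with_rp :: "('a set \<Rightarrow> 'a set set \<Rightarrow> real) \<Rightarrow> 'a restr_op \<Rightarrow> 'a set \<Rightarrow> bool" where
  "agrees_with_rp p r N \<longleftrightarrow> (\<forall>w i S \<pi>. tux_game N w \<longrightarrow> i \<in> N \<longrightarrow> emb (N - {i}) S \<pi> \<longrightarrow>
      r N w i S \<pi> = rp p N w i S \<pi>)"

lemma agrees_with_rpD:
  "agrees_with_rp p r N \<Longrightarrow> tux_game N w \<Longrightarrow> i \<in> N \<Longrightarrow> emb (N - {i}) S \<pi> \<Longrightarrow> r N w i S \<pi> = rp p N w i S \<pi>"
  unfolding agrees_with_rp_def by blast

lemma path_independent_if_agrees:
  assumes "finite U" "positive_rp U p" "restriction_operator U r"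
    and agrees: "\<And>N. N \<subseteq> U \<Longrightarrow> agrees_with_rp p r N"
  shows "path_independent U r"
proof -
  have twice: "r (N - {i}) (r N w i) j S \<pi> = rp p (N - {i}) (rp p N w i) j S \<pi>"
    if "N \<subseteq> U" "tux_game N w" "i \<in> N" "j \<in> N" "i \<noteq> j" "emb (N - {i} - {j}) S \<pi>" for N w i j S \<pi>
  proof -
    have "r (N - {i}) (r N w i) j S \<pi> = rp p (N - {i}) (r N w i) j S \<pi>"
      by (rule agrees_with_rpD[OF agrees[of "N - {i}"]])
        (use that restriction_tux_game[OF assms(3)] in auto)
    also have "\<dots> = rp p (N - {i}) (rp p N w i) j S \<pi>"
    proof (rule rp_cong)
      fix B assume "B \<in> insert {} \<pi>"
      then have "emb (N - {i}) S (add_to j B \<pi>)"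
        using emb_add_to[of "N - {i}" j S \<pi> B] that(4-6) by simp
      then show "r N w i S (add_to j B \<pi>) = rp p N w i S (add_to j B \<pi>)"
        using agrees_with_rpD[OF agrees that(2,3)] that(1) by simp
    qed
    finally show ?thesis .
  qed
  show ?thesis
    unfolding path_independent_def
  proof (intro allI impI)
    fix N w i j S \<pi>
    assume "N \<subseteq> U" "tux_game N w" "i \<in> N" "j \<in> N" "i \<noteq> j" "emb (N - {i} - {j}) S \<pi>"
    moreover have "N - {j} - {i} = N - {i} - {j}"
      by blast
    moreover have "finite N"
      using assms(1) \<open>N \<subseteq> U\<close> finite_subset by blast
    ultimately show "r (N - {i}) (r N w i) j S \<pi> = r (N - {j}) (r N w j) i S \<pi>"
      using twice[of N w i j S \<pi>] twice[of N w j i S \<pi>] rp_path_independent[OF _ assms(2)] by simp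
  qed
qed

lemma preserves_null_if_agrees:
  assumes "\<And>N. N \<subseteq> U \<Longrightarrow> agrees_with_rp p r N"
  shows "preserves_null U r"
  using assms rp_preserves_null[of U p]
  unfolding preserves_null_def by (auto simp: agrees_with_rp_def tux_game_def)

lemma Ep_coalition_restriction_if_agrees:
  assumes "finite N" "positive_rp U p" "agrees_with_rp p r N" "N \<subseteq> U" "tux_game N w"
    and "S \<noteq> {}" "S \<subseteq> N" "i \<in> N" "i \<notin> S"
  shows "Ep_coalition p (N - {i}) S (r N w i S)
       = real (card N) / (real (card N) - real (card S)) * Ep_coalition p N S (w S)"
proof -
  have "Ep_coalition p (N - {i}) S (r N w i S) = Ep_coalition p (N - {i}) S (\<lambda>\<sigma>. 1 * rp p N w i S \<sigma>)"
  proof (rule Ep_coalition_cong)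
    fix \<sigma> assume "partition_on (N - {i} - S) \<sigma>"
    then have "emb (N - {i}) S \<sigma>"
      using assms(7,9) by (auto simp: emb_def)
    then show "r N w i S \<sigma> = 1 * rp p N w i S \<sigma>"
      using agrees_with_rpD[OF assms(3,5,8)] by simp
  qed
  also have "\<dots> = real (card N) / (real (card N) - real (card S)) * Ep_coalition p N S (\<lambda>\<rho>. 1 * w S \<rho>)"
    using assms by (intro Ep_coalition_rp) auto
  finally show ?thesis
    by simp
qed

lemma Ep_restriction_if_agrees:
  assumes "finite N" "positive_rp U p" "agrees_with_rp p r N" "N \<subseteq> U" "tux_game N w" "k \<in> N"
  shows "Ep p (N - {k}) (r N w k) = (\<Sum>T\<in>{T \<in> Pow N - {{}}. k \<notin> T}.
           real (card N) / (real (card N) - real (card T)) * Ep_coalition p N T (w T))"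
proof -
  have "Ep p (N - {k}) (r N w k) = (\<Sum>T\<in>Pow (N - {k}) - {{}}. Ep_coalition p (N - {k}) T (r N w k T))"
    using assms(1) by (simp add: Ep_eq_sum_Ep_coalition)
  also have "\<dots> = (\<Sum>T\<in>Pow (N - {k}) - {{}}.
      real (card N) / (real (card N) - real (card T)) * Ep_coalition p N T (w T))"
    using assms by (intro sum.cong refl Ep_coalition_restriction_if_agrees) auto
  also have "Pow (N - {k}) - {{}} = {T \<in> Pow N - {{}}. k \<notin> T}"
    by auto
  finally show ?thesis .
qed

lemma sum_card_complement:
  assumes "finite N" "finite F"
  shows "(\<Sum>k\<in>N. \<Sum>T\<in>{T \<in> F. k \<notin> T}. f T) = (\<Sum>T\<in>F. of_nat (card (N - T)) * f T)"
proof -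
  have "(\<Sum>k\<in>N. \<Sum>T\<in>{T \<in> F. k \<notin> T}. f T) = (\<Sum>T\<in>F. \<Sum>k\<in>N. if k \<notin> T then f T else 0)"
    using assms(2) by (simp add: sum.inter_filter sum.swap[of _ N])
  also have "\<dots> = (\<Sum>T\<in>F. of_nat (card (N - T)) * f T)"
  proof (rule sum.cong[OF refl])
    fix T
    have "(\<Sum>k\<in>N. if k \<notin> T then f T else 0) = (\<Sum>k\<in>N - T. f T)"
      unfolding set_diff_eq by (rule sum.inter_filter[OF assms(1), symmetric])
    then show "(\<Sum>k\<in>N. if k \<notin> T then f T else 0) = of_nat (card (N - T)) * f T"
      by simp
  qed
  finally show ?thesis .
qed

lemma real_card_Diff_subset: "finite N \<Longrightarrow> T \<subseteq> N \<Longrightarrow> real (card (N - T)) = real (card N) - real (card T)"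
  by (simp add: card_Diff_subset card_mono finite_subset of_nat_diff)

lemma sum_Ep_restrictions_if_agrees:
  assumes "finite U" "positive_rp U p"
    and gen: "\<forall>N v. N \<subseteq> U \<longrightarrow> tu_game N v \<longrightarrow> Ep p N (\<lambda>S \<pi>. v S) = Pot N v"
    and "agrees_with_rp p r N" "N \<subseteq> U" "tux_game N w" "N \<noteq> {}"
  shows "(\<Sum>k\<in>N. Ep p (N - {k}) (r N w k)) = real (card N) * Ep p N w - w N {}"
proof -
  let ?n = "real (card N)"
  let ?a = "\<lambda>T. Ep_coalition p N T (w T)"
  let ?F = "Pow N - {{}}"
  have finN: "finite N"
    using assms(1,5) finite_subset by blast
  have "N \<in> ?F"
    using assms(7) by simp
  have "(\<Sum>k\<in>N. Ep p (N - {k}) (r N w k))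
      = (\<Sum>k\<in>N. \<Sum>T\<in>{T \<in> ?F. k \<notin> T}. ?n / (?n - real (card T)) * ?a T)"
    using Ep_restriction_if_agrees[OF finN assms(2,4-6)] by simp
  also have "\<dots> = (\<Sum>T\<in>?F. real (card (N - T)) * (?n / (?n - real (card T)) * ?a T))"
    using finN by (intro sum_card_complement) auto
  also have "\<dots> = (\<Sum>T\<in>?F - {N}. real (card (N - T)) * (?n / (?n - real (card T)) * ?a T))"
    using finN by (subst sum.remove[OF _ \<open>N \<in> ?F\<close>]) auto
  also have "\<dots> = (\<Sum>T\<in>?F - {N}. ?n * ?a T)"
  proof (rule sum.cong[OF refl])
    fix T assume "T \<in> ?F - {N}"
    then have "T \<subseteq> N" "card T < card N"
      using finN by (auto intro: psubset_card_mono)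
    then show "real (card (N - T)) * (?n / (?n - real (card T)) * ?a T) = ?n * ?a T"
      using finN by (simp add: real_card_Diff_subset)
  qed
  also have "\<dots> = ?n * Ep p N w - ?n * ?a N"
    using finN \<open>N \<in> ?F\<close> by (simp add: Ep_eq_sum_Ep_coalition sum_diff1 sum_distrib_left right_diff_distrib)
  also have "?n * ?a N = w N {}"
    using p_singleton_partition[OF gen assms(5) finN assms(7)] assms(7) finN
    by (simp add: Ep_coalition_grand card_gt_0_iff)
  finally show ?thesis .
qed

lemma potr_eq_Ep_if_agrees:
  assumes "finite U" "positive_rp U p"
    and gen: "\<forall>N v. N \<subseteq> U \<longrightarrow> tu_game N v \<longrightarrow> Ep p N (\<lambda>S \<pi>. v S) = Pot N v"
    and "restriction_operator U r" and agrees: "\<And>N. N \<subseteq> U \<Longrightarrow> agrees_with_rp p r N"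
    and "N \<subseteq> U" "tux_game N w"
  shows "potr r N w = Ep p N w"
proof -
  have "finite N"
    using assms(1,6) finite_subset by blast
  then show ?thesis
    using assms(6,7)
  proof (induction N arbitrary: w rule: finite_psubset_induct)
    case (psubset N)
    show ?case
    proof (cases "N = {}")
      case True
      then show ?thesis
        by (simp add: potr.simps Ep_def partition_on_empty)
    next
      case False
      have "(\<Sum>k\<in>N. potr r (N - {k}) (r N w k)) = (\<Sum>k\<in>N. Ep p (N - {k}) (r N w k))"
        using psubset restriction_tux_game[OF assms(4)] by (intro sum.cong refl) blast
      also have "\<dots> = real (card N) * Ep p N w - w N {}"
        using sum_Ep_restrictions_if_agrees[OF assms(1,2) gen agrees psubset.prems False] psubset.prems by blast
      finally show ?thesis
        using False psubset.hyps(1) by (simp add: potr.simps[of r N w] card_gt_0_iff)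
    qed
  qed
qed

section \<open>Operators with the three properties agree with r^p\<close>

locale Ep_potential_restriction =
  fixes U :: "'a set" and p :: "'a set \<Rightarrow> 'a set set \<Rightarrow> real" and r :: "'a restr_op"
  assumes finite_U: "finite U"
    and positive: "positive_rp U p"
    and restriction: "restriction_operator U r"
    and path_indep: "path_independent U r"
    and null: "preserves_null U r"
    and potr_eq_Ep: "\<And>N w. N \<subseteq> U \<Longrightarrow> tux_game N w \<Longrightarrow> potr r N w = Ep p N w"
begin

lemma sum_Ep_coalition_restrictions:
  assumes N: "N \<subseteq> U" and w: "tux_game N w" and S: "S \<noteq> {}" "S \<subset> N"
  shows "(\<Sum>k\<in>N - S. Ep_coalition p (N - {k}) S (r N w k S)) = real (card N) * Ep_coalition p N S (w S)"
proof -
  let ?u = "\<lambda>T \<rho>. if T = S then w T \<rho> else 0"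
  have finN: "finite N"
    using finite_U N finite_subset by blast
  have u: "tux_game N ?u"
    using w S(1) by (simp add: tux_game_def)
  have "Ep p N ?u = (if S \<subseteq> N then Ep_coalition p N S (?u S) else 0)"
    by (rule Ep_eq_Ep_coalition_if_supported[OF finN S(1)]) simp
  then have "Ep_coalition p N S (w S) = Ep p N ?u"
    using S(2) by auto
  also have "\<dots> = potr r N ?u"
    using potr_eq_Ep[OF N u] by simp
  also have "\<dots> = (?u N {} + (\<Sum>k\<in>N. potr r (N - {k}) (r N ?u k))) / real (card N)"
    using S finN by (subst potr.simps) auto
  also have "(\<Sum>k\<in>N. potr r (N - {k}) (r N ?u k))
      = (\<Sum>k\<in>N. if k \<notin> S then Ep_coalition p (N - {k}) S (r N w k S) else 0)"
  proof (rule sum.cong[OF refl])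
    fix k assume k: "k \<in> N"
    have "potr r (N - {k}) (r N ?u k) = Ep p (N - {k}) (r N ?u k)"
      using N restriction_tux_game[OF restriction N u k] by (intro potr_eq_Ep) auto
    also have "\<dots> = (if S \<subseteq> N - {k} then Ep_coalition p (N - {k}) S (r N w k S) else 0)"
      by (rule Ep_restriction_of_coalition_game[OF restriction null finN N w S(1) k])
    finally show "potr r (N - {k}) (r N ?u k) = (if k \<notin> S then Ep_coalition p (N - {k}) S (r N w k S) else 0)"
      using S(2) by auto
  qed
  also have "\<dots> = (\<Sum>k\<in>N - S. Ep_coalition p (N - {k}) S (r N w k S))"
    unfolding set_diff_eq by (rule sum.inter_filter[OF finN, symmetric])
  finally show ?thesis
    using S finN by (auto simp: card_gt_0_iff)
qed

lemma Ep_coalition_restriction_indep: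
  assumes N: "N \<subseteq> U" and w: "tux_game N w" and S: "S \<noteq> {}" "S \<subseteq> N"
    and kj: "k \<in> N - S" "j \<in> N - S" "k \<noteq> j"
    and agrees: "agrees_with_rp p r (N - {k})" "agrees_with_rp p r (N - {j})"
  shows "Ep_coalition p (N - {k}) S (r N w k S) = Ep_coalition p (N - {j}) S (r N w j S)"
proof -
  let ?c = "real (card N - 1) / (real (card N - 1) - real (card S))"
  have finN: "finite N"
    using finite_U N finite_subset by blast
  have twice: "Ep_coalition p (N - {a} - {b}) S (r (N - {a}) (r N w a) b S) = ?c * Ep_coalition p (N - {a}) S (r N w a S)"
    if "agrees_with_rp p r (N - {a})" "a \<in> N - S" "b \<in> N - S" "a \<noteq> b" for a b
  proof -
    have "N - {a} \<subseteq> U" "tux_game (N - {a}) (r N w a)" "S \<subseteq> N - {a}" "b \<in> N - {a}" "b \<notin> S"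
      using N w S that(2-4) restriction_tux_game[OF restriction] by auto
    then show ?thesis
      using Ep_coalition_restriction_if_agrees[OF _ positive that(1)] S(1) that(2) finN
      by (simp add: card_Diff_singleton)
  qed
  have "Ep_coalition p (N - {k} - {j}) S (r (N - {k}) (r N w k) j S)
      = Ep_coalition p (N - {j} - {k}) S (r (N - {j}) (r N w j) k S)"
  proof -
    have swap: "N - {j} - {k} = N - {k} - {j}"
      by blast
    show ?thesis
      unfolding swap
    proof (rule Ep_coalition_cong)
      fix \<sigma> assume "partition_on (N - {k} - {j} - S) \<sigma>"
      then have "emb (N - {k} - {j}) S \<sigma>"
        using S kj by (auto simp: emb_def)
      then show "r (N - {k}) (r N w k) j S \<sigma> = r (N - {j}) (r N w j) k S \<sigma>"
        using path_indep N w kj unfolding path_independent_def by blast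
    qed
  qed
  then have "?c * Ep_coalition p (N - {k}) S (r N w k S) = ?c * Ep_coalition p (N - {j}) S (r N w j S)"
    using twice[OF agrees(1) kj] twice[OF agrees(2) kj(2,1) kj(3)[symmetric]] by simp
  moreover have "?c \<noteq> 0"
  proof -
    have "S \<subset> N - {k}"
      using S kj by blast
    then have "card S < card (N - {k})"
      using finN by (intro psubset_card_mono) auto
    then have "real (card S) < real (card N - 1)"
      using kj finN by (simp add: card_Diff_singleton)
    then show ?thesis
      by (smt (verit) divide_eq_0_iff of_nat_0_le_iff)
  qed
  ultimately show ?thesis
    by (metis mult_left_cancel)
qed

lemma Ep_coalition_restriction:
  assumes N: "N \<subseteq> U" and w: "tux_game N w" and S: "S \<noteq> {}" "S \<subseteq> N" and i: "i \<in> N - S"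
    and agrees: "\<And>k. k \<in> N - S \<Longrightarrow> agrees_with_rp p r (N - {k})"
  shows "(real (card N) - real (card S)) * Ep_coalition p (N - {i}) S (r N w i S)
       = real (card N) * Ep_coalition p N S (w S)"
proof -
  have finN: "finite N"
    using finite_U N finite_subset by blast
  have "S \<subset> N"
    using S(2) i by blast
  then have "real (card N) * Ep_coalition p N S (w S) = (\<Sum>k\<in>N - S. Ep_coalition p (N - {k}) S (r N w k S))"
    using sum_Ep_coalition_restrictions[OF N w S(1)] by simp
  also have "\<dots> = (\<Sum>k\<in>N - S. Ep_coalition p (N - {i}) S (r N w i S))"
  proof (rule sum.cong[OF refl])
    fix k assume k: "k \<in> N - S"
    show "Ep_coalition p (N - {k}) S (r N w k S) = Ep_coalition p (N - {i}) S (r N w i S)"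
    proof (cases "k = i")
      case False
      show ?thesis
        using Ep_coalition_restriction_indep[OF N w S k i False agrees[OF k] agrees[OF i]] .
    qed simp
  qed
  also have "\<dots> = (real (card N) - real (card S)) * Ep_coalition p (N - {i}) S (r N w i S)"
    using finN S(2) by (simp add: real_card_Diff_subset)
  finally show ?thesis
    by (rule sym)
qed

lemma agrees_with_rp_if_agrees_below:
  assumes N: "N \<subseteq> U" and below: "\<And>k. k \<in> N \<Longrightarrow> agrees_with_rp p r (N - {k})"
  shows "agrees_with_rp p r N"
  unfolding agrees_with_rp_def
proof (intro allI impI)
  fix w i S \<sigma>\<^sub>0
  assume w: "tux_game N w" and i: "i \<in> N" and e: "emb (N - {i}) S \<sigma>\<^sub>0"
  have SN: "S \<subseteq> N - {i}" and \<sigma>\<^sub>0: "partition_on (N - {i} - S) \<sigma>\<^sub>0"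
    using e by (auto simp: emb_def)
  show "r N w i S \<sigma>\<^sub>0 = rp p N w i S \<sigma>\<^sub>0"
  proof (cases "S = {}")
    case True
    then show ?thesis
      using restriction_tux_game[OF restriction N w i] rp_tux_game[OF w i] \<sigma>\<^sub>0
      by (simp add: tux_game_def)
  next
    case False
    let ?w' = "\<lambda>T \<rho>. if T = S \<and> drop_player i \<rho> = \<sigma>\<^sub>0 then w T \<rho> else 0"
    let ?n = "real (card N)" and ?s = "real (card S)" and ?q = "p (N - {i}) (insert S \<sigma>\<^sub>0)"
    have finN: "finite N"
      using finite_U N finite_subset by blast
    have w': "tux_game N ?w'"
      using False by (simp add: tux_game_def)
    have "S \<subset> N"
      using SN i by blast
    then have "?s < ?n"
      using finN by (simp add: psubset_card_mono)
    have "N - {i} \<subseteq> U"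
      using N by blast
    then have "?q > 0"
      by (rule positive_rpD[OF positive _ partition_on_insert_block[OF False SN \<sigma>\<^sub>0]])
    have "Ep_coalition p (N - {i}) S (r N ?w' i S)
        = Ep_coalition p (N - {i}) S (\<lambda>\<sigma>. of_bool (\<sigma> = \<sigma>\<^sub>0) * r N w i S \<sigma>)"
      using SN by (intro Ep_coalition_cong restriction_localized_game[OF restriction null N w i False])
        (simp add: emb_def)
    then have "(?n - ?s) * (?q * r N w i S \<sigma>\<^sub>0) = (?n - ?s) * Ep_coalition p (N - {i}) S (r N ?w' i S)"
      using Ep_coalition_indicator[OF _ \<sigma>\<^sub>0] finN by simp
    also have "\<dots> = ?n * Ep_coalition p N S (?w' S)"
      using SN i below by (intro Ep_coalition_restriction[OF N w' False]) auto
    also have "Ep_coalition p N S (?w' S) = Ep_coalition p N S (\<lambda>\<rho>. of_bool (drop_player i \<rho> = \<sigma>\<^sub>0) * w S \<rho>)"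
      by (rule Ep_coalition_cong) simp
    also have "?n * \<dots> = (?n - ?s) * (?q * rp p N w i S \<sigma>\<^sub>0)"
      using rp_as_Ep_coalition[OF finN N positive False e i] \<open>?s < ?n\<close> by simp
    finally show ?thesis
      using \<open>?s < ?n\<close> \<open>?q > 0\<close> by simp
  qed
qed

lemma agrees_with_rp_everywhere:
  assumes "N \<subseteq> U"
  shows "agrees_with_rp p r N"
proof -
  have "finite N"
    using finite_U assms finite_subset by blast
  then show ?thesis
    using assms
  proof (induction N rule: finite_psubset_induct)
    case (psubset N)
    show ?case
    proof (rule agrees_with_rp_if_agrees_below[OF psubset.prems])
      fix k assume "k \<in> N"
      then show "agrees_with_rp p r (N - {k})"
        using psubset.prems by (intro psubset.IH) auto
    qed
  qed
qed

end

theorem theorem4: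
  fixes U :: "'a set" and p :: "'a set \<Rightarrow> 'a set set \<Rightarrow> real" and r :: "'a restr_op"
  assumes "finite U"
    and "random_partition U p"
    and "positive_rp U p"
    and "\<forall>N v. N \<subseteq> U \<longrightarrow> tu_game N v \<longrightarrow> Ep p N (\<lambda>S \<pi>. v S) = Pot N v"
    and "restriction_operator U r"
  shows "(path_independent U r \<and> preserves_null U r \<and>
          (\<forall>N w. N \<subseteq> U \<longrightarrow> tux_game N w \<longrightarrow> potr r N w = Ep p N w))
     \<longleftrightarrow> (\<forall>N w i S \<pi>. N \<subseteq> U \<longrightarrow> tux_game N w \<longrightarrow> i \<in> N \<longrightarrow> emb (N - {i}) S \<pi> \<longrightarrow>
            r N w i S \<pi> = rp p N w i S \<pi>)"
proof
  assume "path_independent U r \<and> preserves_null U r \<and>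
          (\<forall>N w. N \<subseteq> U \<longrightarrow> tux_game N w \<longrightarrow> potr r N w = Ep p N w)"
  then interpret Ep_potential_restriction U p r
    using assms(1,3,5) by unfold_locales auto
  show "\<forall>N w i S \<pi>. N \<subseteq> U \<longrightarrow> tux_game N w \<longrightarrow> i \<in> N \<longrightarrow> emb (N - {i}) S \<pi> \<longrightarrow>
          r N w i S \<pi> = rp p N w i S \<pi>"
    using agrees_with_rpD[OF agrees_with_rp_everywhere] by blast
next
  assume "\<forall>N w i S \<pi>. N \<subseteq> U \<longrightarrow> tux_game N w \<longrightarrow> i \<in> N \<longrightarrow> emb (N - {i}) S \<pi> \<longrightarrow>
            r N w i S \<pi> = rp p N w i S \<pi>"
  then have agrees: "\<And>N. N \<subseteq> U \<Longrightarrow> agrees_with_rp p r N"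
    unfolding agrees_with_rp_def by blast
  show "path_independent U r \<and> preserves_null U r \<and>
          (\<forall>N w. N \<subseteq> U \<longrightarrow> tux_game N w \<longrightarrow> potr r N w = Ep p N w)"
    using path_independent_if_agrees[OF assms(1,3,5) agrees] preserves_null_if_agrees[OF agrees]
      potr_eq_Ep_if_agrees[OF assms(1,3,4,5) agrees] by blast
qed

end
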